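(* For every $n\ge 2$ and every Greene–Kleitman chain $C$ in $Q_n$ with $|C|\ge 2$, the chains $C$ and $f(C)$ are connected both at their top ends and at their bottom ends in $Q_n$, and likewise the chains $C$ and $\ell(C)$ are connected both at their top ends and at their bottom ends in $Q_n$.
   Context: $Q_n$ is the hypercube on $\{0,1\}^n$. Let $D$ be the set of bitstrings (including the empty string) with equally many $0$s and $1$s such that every prefix has at least as many $0$s as $1$s. A Greene–Kleitman chain is a string of length $n$ over $\{0,1,*\}$ of the form $u_0*u_1*\cdots*u_{h-1}*u_h$ with all $u_j\in D$, representing the path whose vertices are obtained by replacing the $*$s by $i$ ones followed by $h-i$ zeros, $i=0,\ldots,h$; $|C|=h$ is its number of $*$s. Its bottom end $b(C)$ is obtained by replacing all $*$s by $0$, its top end $t(C)$ by replacing all $*$s by $1$. For a string $C$ over $\{0,1,*\}$ with at least two $*$s, $f(C)$ (resp. $\ell(C)$) is obtained by replacing the first two (resp. last two) $*$s by $0$ and $1$, respectively. Two chains $C,C'$ are connected at their bottom ends (resp. top ends) if $b(C)$ and $b(C')$ (resp. $t(C)$ and $t(C')$) differ in exactly one position. *)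

theory Defs
  imports Main
begin

datatype sym = Zero | One | Star

definition dyck :: "sym list \<Rightarrow> bool" where
  "dyck u \<longleftrightarrow> set u \<subseteq> {Zero, One} \<and> count_list u Zero = count_list u One \<and>
     (\<forall>k \<le> length u. count_list (take k u) One \<le> count_list (take k u) Zero)"

fun join_stars :: "sym list list \<Rightarrow> sym list" where
  "join_stars [] = []"
| "join_stars [u] = u"
| "join_stars (u # us) = u @ [Star] @ join_stars us"

definition gk_chain :: "sym list \<Rightarrow> bool" where
  "gk_chain C \<longleftrightarrow> (\<exists>us. us \<noteq> [] \<and> (\<forall>u \<in> set us. dyck u) \<and> C = join_stars us)"

definition num_stars :: "sym list \<Rightarrow> nat" where
  "num_stars C = count_list C Star"

definition bot_end :: "sym list \<Rightarrow> sym list" where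
  "bot_end C = map (\<lambda>x. if x = Star then Zero else x) C"

definition top_end :: "sym list \<Rightarrow> sym list" where
  "top_end C = map (\<lambda>x. if x = Star then One else x) C"

fun repl_first :: "sym \<Rightarrow> sym list \<Rightarrow> sym list" where
  "repl_first c [] = []"
| "repl_first c (x # xs) = (if x = Star then c # xs else x # repl_first c xs)"

definition f_op :: "sym list \<Rightarrow> sym list" where
  "f_op C = repl_first One (repl_first Zero C)"

text \<open>l(C): last two *s replaced by 0 and 1 respectively.\<close>
definition l_op :: "sym list \<Rightarrow> sym list" where
  "l_op C = rev (repl_first Zero (repl_first One (rev C)))"

definition differ_one :: "sym list \<Rightarrow> sym list \<Rightarrow> bool" where
  "differ_one x y \<longleftrightarrow> length x = length y \<and>
     card {i. i < length x \<and> x ! i \<noteq> y ! i} = 1"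

definition connected_bot :: "sym list \<Rightarrow> sym list \<Rightarrow> bool" where
  "connected_bot C C' \<longleftrightarrow> differ_one (bot_end C) (bot_end C')"

definition connected_top :: "sym list \<Rightarrow> sym list \<Rightarrow> bool" where
  "connected_top C C' \<longleftrightarrow> differ_one (top_end C) (top_end C')"

end

theory Submission
  imports Defs
begin

text \<open>Replacing two stars by 0 and 1 changes the top end in exactly one position (the first of
  them, where 1 becomes 0) and the bottom end in exactly one position (the second, where 0 becomes
  1). For both \<open>f\<close> and \<open>\<ell>\<close> the symbol put in the earlier position is 0, so the argument is the same.\<close>

lemma differ_one_append_Cons:
  assumes "x \<noteq> y"
  shows "differ_one (xs @ x # ys) (xs @ y # ys)"
proof -
  have "{i. i < length (xs @ x # ys) \<and> (xs @ x # ys) ! i \<noteq> (xs @ y # ys) ! i} = {length xs}"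
  proof (rule set_eqI)
    fix i
    show "i \<in> {i. i < length (xs @ x # ys) \<and> (xs @ x # ys) ! i \<noteq> (xs @ y # ys) ! i}
          \<longleftrightarrow> i \<in> {length xs}"
    proof (cases "i \<le> length xs")
      case True
      then show ?thesis using assms by (cases "i = length xs") (auto simp: nth_append)
    next
      case False
      then obtain k where "i = Suc (length xs + k)" by (metis add_Suc_right less_iff_Suc_add not_le)
      then show ?thesis by (auto simp: nth_append)
    qed
  qed
  then show ?thesis unfolding differ_one_def by simp
qed

lemma connected_top_replace_two_stars:
  "connected_top (p @ Star # q @ Star # r) (p @ Zero # q @ One # r)"
  unfolding connected_top_def top_end_def
  using differ_one_append_Cons[of One Zero] by simp

lemma connected_bot_replace_two_stars:
  "connected_bot (p @ Star # q @ Star # r) (p @ Zero # q @ One # r)"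
  unfolding connected_bot_def bot_end_def
  using differ_one_append_Cons[of Zero One "_ @ Zero # _"] by simp

lemma repl_first_append_Star:
  "Star \<notin> set a \<Longrightarrow> repl_first s (a @ Star # c) = a @ s # c"
  by (induction a) auto

lemma f_op_eq:
  assumes "Star \<notin> set a" and "Star \<notin> set b"
  shows "f_op (a @ Star # b @ Star # c) = a @ Zero # b @ One # c"
  using assms repl_first_append_Star[of "a @ Zero # b"]
  by (simp add: f_op_def repl_first_append_Star)

lemma l_op_eq:
  assumes "Star \<notin> set b" and "Star \<notin> set c"
  shows "l_op (a @ Star # b @ Star # c) = a @ Zero # b @ One # c"
  using assms repl_first_append_Star[of "rev c @ One # rev b"]
  by (simp add: l_op_def repl_first_append_Star)

lemma split_first_two_stars:
  assumes "2 \<le> count_list C Star"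
  obtains a b c where "C = a @ Star # b @ Star # c" and "Star \<notin> set a" and "Star \<notin> set b"
proof -
  have "Star \<in> set C" using assms by (metis count_list_0_iff not_numeral_le_zero)
  then obtain a d where C: "C = a @ Star # d" and a: "Star \<notin> set a"
    by (metis split_list_first)
  then have "count_list d Star \<noteq> 0" using assms by simp
  then have "Star \<in> set d" by (simp add: count_list_0_iff)
  then obtain b c where "d = b @ Star # c" and "Star \<notin> set b" by (metis split_list_first)
  with C a show thesis by (intro that[of a b c]) simp_all
qed

lemma split_last_two_stars:
  assumes "2 \<le> count_list C Star"
  obtains a b c where "C = a @ Star # b @ Star # c" and "Star \<notin> set b" and "Star \<notin> set c"
proof -
  obtain c' b' a' where "rev C = c' @ Star # b' @ Star # a'" "Star \<notin> set c'" "Star \<notin> set b'"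
    using split_first_two_stars[of "rev C"] assms by auto
  then have "C = rev a' @ Star # rev b' @ Star # rev c'" "Star \<notin> set (rev b')" "Star \<notin> set (rev c')"
    by (simp_all add: rev_swap)
  then show thesis by (rule that)
qed

theorem lemma18:
  fixes n :: nat and C :: "sym list"
  assumes "n \<ge> 2" and "length C = n" and "gk_chain C" and "num_stars C \<ge> 2"
  shows "connected_top C (f_op C) \<and> connected_bot C (f_op C) \<and>
         connected_top C (l_op C) \<and> connected_bot C (l_op C)"
proof -
  have stars: "2 \<le> count_list C Star" using assms(4) by (simp add: num_stars_def)
  have f: "connected_top C (f_op C) \<and> connected_bot C (f_op C)"
  proof -
    obtain a b c where "C = a @ Star # b @ Star # c" "Star \<notin> set a" "Star \<notin> set b"
      using split_first_two_stars[OF stars] .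
    then show ?thesis
      by (simp add: f_op_eq connected_top_replace_two_stars connected_bot_replace_two_stars)
  qed
  have l: "connected_top C (l_op C) \<and> connected_bot C (l_op C)"
  proof -
    obtain a b c where "C = a @ Star # b @ Star # c" "Star \<notin> set b" "Star \<notin> set c"
      using split_last_two_stars[OF stars] .
    then show ?thesis
      by (simp add: l_op_eq connected_top_replace_two_stars connected_bot_replace_two_stars)
  qed
  from f l show ?thesis by blast
qed

end
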